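(* Let $\sigma=(a_1,\ldots,a_s)$ be a partition of $r$ with $a_1\ge\cdots\ge a_s\ge1$, and let $n\ge s$ and $q\ge a_1$ be integers. Then for every $k$ with $1\le k\le r-1$ there exists at least one $(q,k,\sigma)$-feasible sequence $(b_1,\ldots,b_n)$.
   Context: A sequence $B=(b_1,\ldots,b_n)$ of non-negative integers is $(q,k,\sigma)$-feasible if $b_1\ge b_2\ge\cdots\ge b_n$, $b_j=b_s$ for all $j\ge s$, $q\ge\max\{a_1,b_1\}$, and $\sum_{i=1}^{s}\min\{a_i,b_i\}=k$. *)

theory Defs
  imports Main
begin

text \<open>Sequences are 1-indexed functions nat => nat; only indices 1..n (resp. 1..s) matter.
  sigma = (a 1, ..., a s), B = (b 1, ..., b n).\<close>

definition is_partition :: "(nat \<Rightarrow> nat) \<Rightarrow> nat \<Rightarrow> nat \<Rightarrow> bool" where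
  "is_partition a s r \<longleftrightarrow>
     (\<forall>i j. 1 \<le> i \<longrightarrow> i \<le> j \<longrightarrow> j \<le> s \<longrightarrow> a j \<le> a i) \<and>
     (\<forall>i. 1 \<le> i \<longrightarrow> i \<le> s \<longrightarrow> 1 \<le> a i) \<and>
     (\<Sum>i=1..s. a i) = r"

definition feasible :: "nat \<Rightarrow> nat \<Rightarrow> (nat \<Rightarrow> nat) \<Rightarrow> nat \<Rightarrow> nat \<Rightarrow> (nat \<Rightarrow> nat) \<Rightarrow> bool" where
  "feasible q k a s n b \<longleftrightarrow>
     (\<forall>i j. 1 \<le> i \<longrightarrow> i \<le> j \<longrightarrow> j \<le> n \<longrightarrow> b j \<le> b i) \<and>
     (\<forall>j. s \<le> j \<longrightarrow> j \<le> n \<longrightarrow> b j = b s) \<and>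
     max (a 1) (b 1) \<le> q \<and>
     (\<Sum>i=1..s. min (a i) (b i)) = k"

end

theory Submission
  imports Defs
begin

text \<open>Raise a sequence from 0 to the constant value a 1 one entry at a time, always the
  leftmost entry among those of minimal value, so that it stays non-increasing and constant
  from position s on. Each step raises \<open>\<Sum>i=1..s. min (a i) (b i)\<close> by at most one, from 0
  to r, so some intermediate sequence, reached before the end, hits k exactly.\<close>

lemma nat_ivt_unit_steps:
  fixes f :: "nat \<Rightarrow> nat"
  assumes "f 0 \<le> k" and "k \<le> f N" and "\<And>m. m < N \<Longrightarrow> f (Suc m) \<le> f m + 1"
  shows "\<exists>m\<le>N. f m = k"
  using assms
proof (induction N)
  case 0
  then show ?case by simp
next
  case (Suc N)
  show ?case
  proof (cases "k \<le> f N")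
    case True
    with Suc show ?thesis by (metis le_SucI less_SucI)
  next
    case False
    with Suc.prems have "f (Suc N) = k" by force
    then show ?thesis by blast
  qed
qed

definition staircase :: "nat \<Rightarrow> nat \<Rightarrow> nat \<Rightarrow> nat" where
  "staircase s m i = m div s + (if i \<le> m mod s then 1 else 0)"

lemma staircase_antimono: "i \<le> j \<Longrightarrow> staircase s m j \<le> staircase s m i"
  by (simp add: staircase_def)

lemma staircase_beyond: "m mod s < i \<Longrightarrow> staircase s m i = m div s"
  by (simp add: staircase_def)

lemma staircase_multiple: "0 < s \<Longrightarrow> 0 < i \<Longrightarrow> staircase s (t * s) i = t"
  by (simp add: staircase_def)

lemma staircase_Suc:
  "0 < i \<Longrightarrow> i \<le> s \<Longrightarrow>
    staircase s (Suc m) i = staircase s m i + (if i = Suc (m mod s) then 1 else 0)"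
  by (auto simp: staircase_def div_Suc mod_Suc)

definition coverage :: "(nat \<Rightarrow> nat) \<Rightarrow> nat \<Rightarrow> (nat \<Rightarrow> nat) \<Rightarrow> nat" where
  "coverage a s b = (\<Sum>i=1..s. min (a i) (b i))"

lemma coverage_staircase_Suc_le:
  "coverage a s (staircase s (Suc m)) \<le> coverage a s (staircase s m) + 1"
proof -
  have "coverage a s (staircase s (Suc m))
      \<le> (\<Sum>i=1..s. min (a i) (staircase s m i) + (if i = Suc (m mod s) then 1 else 0))"
    unfolding coverage_def by (rule sum_mono) (auto simp: staircase_Suc)
  also have "\<dots> \<le> coverage a s (staircase s m) + 1"
    by (simp add: coverage_def sum.distrib)
  finally show ?thesis .
qed

lemma coverage_staircase_top:
  assumes "is_partition a s r" and "0 < s"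
  shows "coverage a s (staircase s (a 1 * s)) = r"
proof -
  have "\<And>i. i \<in> {1..s} \<Longrightarrow> min (a i) (staircase s (a 1 * s) i) = a i"
    using assms by (simp add: is_partition_def staircase_multiple)
  then show ?thesis
    using assms by (simp add: coverage_def is_partition_def)
qed

lemma feasible_staircase:
  assumes "0 < s" and "m < a 1 * s" and "a 1 \<le> q" and "coverage a s (staircase s m) = k"
  shows "feasible q k a s n (staircase s m)"
  unfolding feasible_def
proof (intro conjI allI impI)
  fix i j :: nat
  assume "i \<le> j"
  then show "staircase s m j \<le> staircase s m i" by (rule staircase_antimono)
next
  fix j :: nat
  assume "s \<le> j"
  moreover have "m mod s < s" using \<open>0 < s\<close> by simp
  ultimately show "staircase s m j = staircase s m s" by (simp add: staircase_beyond)
next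
  have "m div s < a 1" using \<open>m < a 1 * s\<close> by (rule less_mult_imp_div_less)
  then show "max (a 1) (staircase s m 1) \<le> q" using \<open>a 1 \<le> q\<close> by (simp add: staircase_def)
qed (use assms(4) in \<open>simp add: coverage_def\<close>)

theorem lemma2p6:
  fixes a :: "nat \<Rightarrow> nat" and s r n q k :: nat
  assumes "is_partition a s r"
    and "s \<le> n" and "a 1 \<le> q"
    and "1 \<le> k" and "k \<le> r - 1"
  shows "\<exists>b :: nat \<Rightarrow> nat. feasible q k a s n b"
proof -
  let ?f = "\<lambda>m. coverage a s (staircase s m)"
  have "k < r" using assms(4,5) by linarith
  have "0 < s"
    using assms(1) \<open>k < r\<close> by (cases "s = 0") (simp_all add: is_partition_def)
  have top: "?f (a 1 * s) = r"
    using assms(1) \<open>0 < s\<close> by (rule coverage_staircase_top)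
  have "?f 0 = 0" by (simp add: coverage_def staircase_def)
  then obtain m where "m \<le> a 1 * s" and "?f m = k"
    using nat_ivt_unit_steps[of ?f k "a 1 * s"] top coverage_staircase_Suc_le \<open>k < r\<close> by force
  moreover have "m \<noteq> a 1 * s" using \<open>?f m = k\<close> top \<open>k < r\<close> by auto
  ultimately have "feasible q k a s n (staircase s m)"
    using feasible_staircase \<open>0 < s\<close> assms(3) by simp
  then show ?thesis by blast
qed

end
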